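(* Let $\mathcal{P}$ be a set of scripts, let $\Phi$ be the uniform abstraction defined by $\mathcal{P}$, and let $\Omega$ be an asymmetric abstraction defined by the same set of scripts $\mathcal{P}$ (with any choice of unrestricted units $\mathcal{U}'_i(s) \subseteq \mathcal{U}^r_i(s)$ at each state $s$). For a finite match with start state $s$, let $V_i^{\Phi}(s)$ be the optimal value of the game for player $i$ computed in the space induced by $\Phi$, and let $V_i^{\Omega}(s)$ be defined analogously for $\Omega$. Then $V_i^{\Omega}(s) \ge V_i^{\Phi}(s)$.
   Context: A match is a finite two-player zero-sum game with simultaneous moves between players $i$ and $-i$, given by a finite game tree: states $\mathcal{S}=\mathcal{D}\cup\mathcal{F}$ (non-terminal and terminal), a deterministic transition function $\mathcal{T}(s,a_i,a_{-i})$, and a utility $\mathcal{R}_i:\mathcal{F}\to\mathbb{R}$ with $\mathcal{R}_{-i}=-\mathcal{R}_i$. Each state contains units; at state $s$, $\mathcal{U}^r_i(s)$ denotes player $i$'s ready units, and $\mathcal{M}(s,u)$ denotes the set of legal moves of unit $u$ at $s$. A legal action of player $i$ at $s$ is a vector assigning one legal move to each ready unit of $i$; $\mathcal{A}_i(s)$ is the set of such actions. A script $\bar\sigma$ is a function mapping a state $s$ and a unit $u$ to a legal move $\bar\sigma(s,u)\in\mathcal{M}(s,u)$. For a set of scripts $\mathcal{P}$, let $\mathcal{M}(s,u,\mathcal{P})=\{\bar\sigma(s,u):\bar\sigma\in\mathcal{P}\}$. The uniform abstraction $\Phi$ induced by $\mathcal{P}$ restricts player $i$'s actions at each state $s$ to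 $\mathcal{A}'_i(s)$, the Cartesian product of $\mathcal{M}(s,u,\mathcal{P})$ over all $u\in\mathcal{U}^r_i(s)$. An asymmetric abstraction $\Omega$ induced by $\mathcal{P}$ and a set of unrestricted units $\mathcal{U}'_i(s)\subseteq\mathcal{U}^r_i(s)$ restricts player $i$'s actions at $s$ to $\mathcal{A}''_i(s)$, the Cartesian product of $\mathcal{M}(s,u,\mathcal{P})$ over $u\in\mathcal{U}^r_i(s)\setminus\mathcal{U}'_i(s)$ and of $\mathcal{M}(s,u')$ over $u'\in\mathcal{U}'_i(s)$. The optimal value $V_i^{\Phi}$ is defined by backward induction: $V_i^{\Phi}(z)=\mathcal{R}_i(z)$ for terminal $z$, and for non-terminal $s$, $V_i^{\Phi}(s)=\max_{\sigma_i}\min_{\sigma_{-i}}\sum_{a_i}\sum_{a_{-i}\in\mathcal{A}_{-i}(s)}\sigma_i(s,a_i)\sigma_{-i}(s,a_{-i})V_i^{\Phi}(\mathcal{T}(s,a_i,a_{-i}))$, where $\sigma_i$ ranges over probability distributions over $\mathcal{A}'_i(s)$ and $\sigma_{-i}$ over probability distributions over all of $\mathcal{A}_{-i}(s)$ (player $-i$ is unrestricted); $V_i^{\Omega}$ is defined the same way with $\mathcal{A}''_i(s)$ in place of $\mathcal{A}'_i(s)$. *)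

theory Defs
  imports Complex_Main "HOL-Library.FuncSet"
begin

definition mixed :: "'a set \<Rightarrow> ('a \<Rightarrow> real) set" where
  "mixed A = {\<sigma>. (\<forall>a\<in>A. 0 \<le> \<sigma> a) \<and> sum \<sigma> A = 1}"

text \<open>max over sigma_i of min over sigma_{-i} of the expected payoff
  (written with Sup/Inf; on finite action sets these are attained).\<close>
definition maxmin :: "'a set \<Rightarrow> 'b set \<Rightarrow> ('a \<Rightarrow> 'b \<Rightarrow> real) \<Rightarrow> real" where
  "maxmin A B f = (SUP \<sigma>\<in>mixed A. INF \<tau>\<in>mixed B.
      \<Sum>a\<in>A. \<Sum>b\<in>B. \<sigma> a * \<tau> b * f a b)"

definition legal_actions :: "('s \<Rightarrow> 'u set) \<Rightarrow> ('s \<Rightarrow> 'u \<Rightarrow> 'm set) \<Rightarrow> 's \<Rightarrow> ('u \<Rightarrow> 'm) set" where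
  "legal_actions Ur M s = Pi\<^sub>E (Ur s) (M s)"

definition script_moves :: "('s \<Rightarrow> 'u \<Rightarrow> 'm) set \<Rightarrow> 's \<Rightarrow> 'u \<Rightarrow> 'm set" where
  "script_moves P s u = (\<lambda>\<sigma>. \<sigma> s u) ` P"

definition uniform_actions :: "('s \<Rightarrow> 'u set) \<Rightarrow> ('s \<Rightarrow> 'u \<Rightarrow> 'm) set \<Rightarrow> 's \<Rightarrow> ('u \<Rightarrow> 'm) set" where
  "uniform_actions Ur P s = Pi\<^sub>E (Ur s) (script_moves P s)"

definition asym_actions :: "('s \<Rightarrow> 'u set) \<Rightarrow> ('s \<Rightarrow> 'u \<Rightarrow> 'm set) \<Rightarrow> ('s \<Rightarrow> 'u \<Rightarrow> 'm) set
      \<Rightarrow> ('s \<Rightarrow> 'u set) \<Rightarrow> 's \<Rightarrow> ('u \<Rightarrow> 'm) set" where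
  "asym_actions Ur M P Uu s =
     Pi\<^sub>E (Ur s) (\<lambda>u. if u \<in> Uu s then M s u else script_moves P s u)"

definition is_bi_value ::
  "('s \<Rightarrow> bool) \<Rightarrow> ('s \<Rightarrow> real) \<Rightarrow> ('s \<Rightarrow> 'a \<Rightarrow> 'b \<Rightarrow> 's)
   \<Rightarrow> ('s \<Rightarrow> 'a set) \<Rightarrow> ('s \<Rightarrow> 'b set) \<Rightarrow> ('s \<Rightarrow> real) \<Rightarrow> bool" where
  "is_bi_value isterm R T Ai Ao V \<longleftrightarrow>
     (\<forall>s. (isterm s \<longrightarrow> V s = R s) \<and>
          (\<not> isterm s \<longrightarrow> V s = maxmin (Ai s) (Ao s) (\<lambda>a b. V (T s a b))))"

end

theory Submission
  imports Defs
begin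

text \<open>At every state the uniform action set of player i is contained in the asymmetric one,
  because script moves are legal. Enlarging the maximiser's action set cannot decrease a
  maxmin value: a mixed strategy on the smaller set extends by zero to one on the larger
  set with the same expected payoff. As maxmin is also monotone in the payoff matrix,
  induction on the height of a state in the finite game tree gives the inequality at every
  state.\<close>

definition expected_payoff ::
  "'a set \<Rightarrow> 'b set \<Rightarrow> ('a \<Rightarrow> 'b \<Rightarrow> real) \<Rightarrow> ('a \<Rightarrow> real) \<Rightarrow> ('b \<Rightarrow> real) \<Rightarrow> real" where
  "expected_payoff A B f \<sigma> \<tau> = (\<Sum>a\<in>A. \<Sum>b\<in>B. \<sigma> a * \<tau> b * f a b)"

lemma maxmin_eq_expected_payoff:
  "maxmin A B f = (SUP \<sigma>\<in>mixed A. INF \<tau>\<in>mixed B. expected_payoff A B f \<sigma> \<tau>)"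
  by (simp add: maxmin_def expected_payoff_def)

lemma mixed_nonneg: "\<sigma> \<in> mixed A \<Longrightarrow> a \<in> A \<Longrightarrow> 0 \<le> \<sigma> a"
  by (simp add: mixed_def)

lemma mixed_le_1:
  assumes "finite A" "\<sigma> \<in> mixed A" "a \<in> A"
  shows "\<sigma> a \<le> 1"
proof -
  have "\<sigma> a \<le> sum \<sigma> A"
    using assms by (intro member_le_sum) (auto simp: mixed_def)
  thus ?thesis using assms by (simp add: mixed_def)
qed

lemma mixed_nonempty:
  assumes "finite A" "A \<noteq> {}"
  shows "mixed A \<noteq> {}"
proof -
  obtain a0 where "a0 \<in> A" using assms by auto
  hence "(\<lambda>a. if a = a0 then 1 else 0) \<in> mixed A"
    using assms by (simp add: mixed_def)
  thus ?thesis by auto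
qed

lemma mixed_extend_by_zero:
  assumes "\<sigma> \<in> mixed A" "A \<subseteq> A'" "finite A'"
  shows "(\<lambda>a. if a \<in> A then \<sigma> a else 0) \<in> mixed A'"
proof -
  have "(\<Sum>a\<in>A'. if a \<in> A then \<sigma> a else 0) = sum \<sigma> A"
    using assms(2,3) by (simp add: sum.If_cases Int_absorb1)
  thus ?thesis using assms(1) by (auto simp: mixed_def)
qed

lemma expected_payoff_extend_by_zero:
  assumes "A \<subseteq> A'" "finite A'"
  shows "expected_payoff A' B f (\<lambda>a. if a \<in> A then \<sigma> a else 0) \<tau> = expected_payoff A B f \<sigma> \<tau>"
  unfolding expected_payoff_def
  by (subst sum.mono_neutral_right[OF assms(2,1)]) auto

lemma abs_expected_payoff_le:
  assumes "finite A" "finite B" "\<sigma> \<in> mixed A" "\<tau> \<in> mixed B"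
  shows "\<bar>expected_payoff A B f \<sigma> \<tau>\<bar> \<le> (\<Sum>a\<in>A. \<Sum>b\<in>B. \<bar>f a b\<bar>)"
proof -
  have "\<bar>expected_payoff A B f \<sigma> \<tau>\<bar> \<le> (\<Sum>a\<in>A. \<Sum>b\<in>B. \<bar>\<sigma> a * \<tau> b * f a b\<bar>)"
    unfolding expected_payoff_def by (rule order_trans[OF sum_abs sum_mono[OF sum_abs]])
  also have "\<dots> \<le> (\<Sum>a\<in>A. \<Sum>b\<in>B. \<bar>f a b\<bar>)"
  proof (intro sum_mono)
    fix a b assume a: "a \<in> A" and b: "b \<in> B"
    have "0 \<le> \<sigma> a" "\<sigma> a \<le> 1" "0 \<le> \<tau> b" "\<tau> b \<le> 1"
      using assms a b by (auto intro: mixed_nonneg mixed_le_1)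
    hence "\<sigma> a * \<tau> b * \<bar>f a b\<bar> \<le> 1 * 1 * \<bar>f a b\<bar>"
      by (intro mult_right_mono mult_mono) auto
    thus "\<bar>\<sigma> a * \<tau> b * f a b\<bar> \<le> \<bar>f a b\<bar>"
      using \<open>0 \<le> \<sigma> a\<close> \<open>0 \<le> \<tau> b\<close> by (simp add: abs_mult)
  qed
  finally show ?thesis .
qed

lemma bdd_below_expected_payoff:
  assumes "finite A" "finite B" "\<sigma> \<in> mixed A"
  shows "bdd_below (expected_payoff A B f \<sigma> ` mixed B)"
proof (rule bdd_belowI2)
  fix \<tau> assume "\<tau> \<in> mixed B"
  from abs_expected_payoff_le[OF assms this, of f]
  show "- (\<Sum>a\<in>A. \<Sum>b\<in>B. \<bar>f a b\<bar>) \<le> expected_payoff A B f \<sigma> \<tau>"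
    by (auto simp: abs_le_iff)
qed

lemma bdd_above_INF_expected_payoff:
  assumes "finite A" "finite B" "B \<noteq> {}"
  shows "bdd_above ((\<lambda>\<sigma>. INF \<tau>\<in>mixed B. expected_payoff A B f \<sigma> \<tau>) ` mixed A)"
proof (rule bdd_aboveI2)
  obtain \<tau>0 where \<tau>0: "\<tau>0 \<in> mixed B" using mixed_nonempty[OF assms(2,3)] by auto
  fix \<sigma> assume \<sigma>: "\<sigma> \<in> mixed A"
  have "(INF \<tau>\<in>mixed B. expected_payoff A B f \<sigma> \<tau>) \<le> expected_payoff A B f \<sigma> \<tau>0"
    by (rule cINF_lower[OF bdd_below_expected_payoff[OF assms(1,2) \<sigma>] \<tau>0])
  also have "\<dots> \<le> (\<Sum>a\<in>A. \<Sum>b\<in>B. \<bar>f a b\<bar>)"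
    using abs_expected_payoff_le[OF assms(1,2) \<sigma> \<tau>0, of f] by linarith
  finally show "(INF \<tau>\<in>mixed B. expected_payoff A B f \<sigma> \<tau>) \<le> (\<Sum>a\<in>A. \<Sum>b\<in>B. \<bar>f a b\<bar>)" .
qed

lemma expected_payoff_mono:
  assumes "\<sigma> \<in> mixed A" "\<tau> \<in> mixed B" "\<And>a b. a \<in> A \<Longrightarrow> b \<in> B \<Longrightarrow> f a b \<le> g a b"
  shows "expected_payoff A B f \<sigma> \<tau> \<le> expected_payoff A B g \<sigma> \<tau>"
  unfolding expected_payoff_def
  using assms by (intro sum_mono mult_left_mono) (auto intro: mixed_nonneg mult_nonneg_nonneg)

lemma maxmin_mono:
  assumes "A \<subseteq> A'" "finite A'" "A \<noteq> {}" "finite B" "B \<noteq> {}"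
    and "\<And>a b. a \<in> A \<Longrightarrow> b \<in> B \<Longrightarrow> f a b \<le> g a b"
  shows "maxmin A B f \<le> maxmin A' B g"
  unfolding maxmin_eq_expected_payoff
proof (rule cSUP_least)
  have "finite A" using assms(1,2) by (rule finite_subset)
  then show "mixed A \<noteq> {}" using assms(3) by (rule mixed_nonempty)
  fix \<sigma> assume \<sigma>: "\<sigma> \<in> mixed A"
  define \<sigma>' where "\<sigma>' = (\<lambda>a. if a \<in> A then \<sigma> a else 0)"
  have \<sigma>': "\<sigma>' \<in> mixed A'"
    unfolding \<sigma>'_def using \<sigma> assms(1,2) by (rule mixed_extend_by_zero)
  have "(INF \<tau>\<in>mixed B. expected_payoff A B f \<sigma> \<tau>) \<le> (INF \<tau>\<in>mixed B. expected_payoff A' B g \<sigma>' \<tau>)"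
  proof (rule cINF_mono)
    show "mixed B \<noteq> {}" using assms(4,5) by (rule mixed_nonempty)
    show "bdd_below (expected_payoff A B f \<sigma> ` mixed B)"
      using \<open>finite A\<close> assms(4) \<sigma> by (rule bdd_below_expected_payoff)
    fix \<tau> assume \<tau>: "\<tau> \<in> mixed B"
    have "expected_payoff A B f \<sigma> \<tau> \<le> expected_payoff A' B g \<sigma>' \<tau>"
      unfolding \<sigma>'_def expected_payoff_extend_by_zero[OF assms(1,2)]
      using \<sigma> \<tau> assms(6) by (rule expected_payoff_mono)
    thus "\<exists>\<tau>'\<in>mixed B. expected_payoff A B f \<sigma> \<tau>' \<le> expected_payoff A' B g \<sigma>' \<tau>"
      using \<tau> by blast
  qed
  also have "\<dots> \<le> (SUP \<sigma>\<in>mixed A'. INF \<tau>\<in>mixed B. expected_payoff A' B g \<sigma> \<tau>)"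
    using \<sigma>' bdd_above_INF_expected_payoff[OF assms(2,4,5)] by (rule cSUP_upper)
  finally show "(INF \<tau>\<in>mixed B. expected_payoff A B f \<sigma> \<tau>)
      \<le> (SUP \<sigma>\<in>mixed A'. INF \<tau>\<in>mixed B. expected_payoff A' B g \<sigma> \<tau>)" .
qed

lemma is_bi_value_mono:
  fixes rk :: "'s \<Rightarrow> nat"
  assumes V: "is_bi_value isterm R T A B V" and V': "is_bi_value isterm R T A' B V'"
    and sub: "\<And>s. A s \<subseteq> A' s" and fin: "\<And>s. finite (A' s)" "\<And>s. finite (B s)"
    and ne: "\<And>s. A s \<noteq> {}" "\<And>s. B s \<noteq> {}"
    and rank: "\<And>s a b. \<not> isterm s \<Longrightarrow> a \<in> A s \<Longrightarrow> b \<in> B s \<Longrightarrow> rk (T s a b) < rk s"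
  shows "V s \<le> V' s"
proof (induction "rk s" arbitrary: s rule: less_induct)
  case less
  show ?case
  proof (cases "isterm s")
    case True
    thus ?thesis using V V' by (simp add: is_bi_value_def)
  next
    case False
    have "maxmin (A s) (B s) (\<lambda>a b. V (T s a b)) \<le> maxmin (A' s) (B s) (\<lambda>a b. V' (T s a b))"
      by (rule maxmin_mono[OF sub fin(1) ne(1) fin(2) ne(2)]) (use False rank less in blast)
    thus ?thesis using V V' False by (simp add: is_bi_value_def)
  qed
qed

lemma uniform_actions_subset_asym_actions:
  assumes "\<And>\<sigma> u. \<sigma> \<in> P \<Longrightarrow> u \<in> Uu s \<Longrightarrow> \<sigma> s u \<in> M s u"
  shows "uniform_actions Ur P s \<subseteq> asym_actions Ur M P Uu s"
  unfolding uniform_actions_def asym_actions_def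
  using assms by (intro PiE_mono) (auto simp: script_moves_def)

lemma asym_actions_subset_legal_actions:
  assumes "\<And>\<sigma> u. \<sigma> \<in> P \<Longrightarrow> u \<in> Ur s \<Longrightarrow> \<sigma> s u \<in> M s u"
  shows "asym_actions Ur M P Uu s \<subseteq> legal_actions Ur M s"
  unfolding asym_actions_def legal_actions_def
  using assms by (intro PiE_mono) (auto simp: script_moves_def)

lemma finite_legal_actions:
  "finite (Ur s) \<Longrightarrow> (\<And>u. u \<in> Ur s \<Longrightarrow> finite (M s u)) \<Longrightarrow> finite (legal_actions Ur M s)"
  unfolding legal_actions_def by (rule finite_PiE)

lemma legal_actions_nonempty:
  "(\<And>u. u \<in> Ur s \<Longrightarrow> M s u \<noteq> {}) \<Longrightarrow> legal_actions Ur M s \<noteq> {}"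
  by (auto simp: legal_actions_def PiE_eq_empty_iff)

lemma uniform_actions_nonempty: "P \<noteq> {} \<Longrightarrow> uniform_actions Ur P s \<noteq> {}"
  by (auto simp: uniform_actions_def PiE_eq_empty_iff script_moves_def)

theorem theorem1:
  fixes isterm :: "'s \<Rightarrow> bool"
    and R :: "'s \<Rightarrow> real"
    and T :: "'s \<Rightarrow> ('u \<Rightarrow> 'm) \<Rightarrow> ('u \<Rightarrow> 'm) \<Rightarrow> 's"
    and Ui Uo :: "'s \<Rightarrow> 'u set"
    and M :: "'s \<Rightarrow> 'u \<Rightarrow> 'm set"
    and rk :: "'s \<Rightarrow> nat"
    and P :: "('s \<Rightarrow> 'u \<Rightarrow> 'm) set"
    and Uu :: "'s \<Rightarrow> 'u set"
    and VPhi VOmega :: "'s \<Rightarrow> real"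
    and s0 :: 's
  assumes fin_Ui: "\<And>s. finite (Ui s)"
    and fin_Uo: "\<And>s. finite (Uo s)"
    and fin_Mi: "\<And>s u. u \<in> Ui s \<Longrightarrow> finite (M s u) \<and> M s u \<noteq> {}"
    and fin_Mo: "\<And>s u. u \<in> Uo s \<Longrightarrow> finite (M s u) \<and> M s u \<noteq> {}"
    and finite_tree: "\<And>s a b. \<not> isterm s \<Longrightarrow> a \<in> legal_actions Ui M s \<Longrightarrow>
                         b \<in> legal_actions Uo M s \<Longrightarrow> rk (T s a b) < rk s"
    and P_ne: "P \<noteq> {}"
    and P_legal: "\<And>\<sigma> s u. \<sigma> \<in> P \<Longrightarrow> u \<in> Ui s \<Longrightarrow> \<sigma> s u \<in> M s u"
    and Uu_sub: "\<And>s. Uu s \<subseteq> Ui s"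
    and VPhi: "is_bi_value isterm R T (uniform_actions Ui P) (legal_actions Uo M) VPhi"
    and VOmega: "is_bi_value isterm R T (asym_actions Ui M P Uu) (legal_actions Uo M) VOmega"
  shows "VOmega s0 \<ge> VPhi s0"
proof -
  have uniform_sub: "uniform_actions Ui P s \<subseteq> asym_actions Ui M P Uu s" for s
    using P_legal Uu_sub by (intro uniform_actions_subset_asym_actions) blast
  have asym_sub: "asym_actions Ui M P Uu s \<subseteq> legal_actions Ui M s" for s
    using P_legal by (rule asym_actions_subset_legal_actions)
  have fin_asym: "finite (asym_actions Ui M P Uu s)" for s
    using asym_sub finite_legal_actions[of Ui s M] fin_Ui fin_Mi by (meson finite_subset)
  have fin_opp: "finite (legal_actions Uo M s)" for s
    using fin_Uo fin_Mo by (simp add: finite_legal_actions)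
  have opp_ne: "legal_actions Uo M s \<noteq> {}" for s
    using fin_Mo by (simp add: legal_actions_nonempty)
  have rank: "rk (T s a b) < rk s"
    if "\<not> isterm s" "a \<in> uniform_actions Ui P s" "b \<in> legal_actions Uo M s" for s a b
  proof (rule finite_tree[OF that(1) _ that(3)])
    show "a \<in> legal_actions Ui M s" using that(2) uniform_sub asym_sub by blast
  qed
  show ?thesis
    using VPhi VOmega uniform_sub fin_asym fin_opp uniform_actions_nonempty[OF P_ne] opp_ne rank
    by (rule is_bi_value_mono)
qed

end
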